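(* Let $X$ be a unital Banach algebra with unit $e$, let $\theta\in X$, and let $M_\theta$ be either the left multiplication operator $y\mapsto\theta y$ or the right multiplication operator $y\mapsto y\theta$ on $X$. Then $M_\theta$ is recurrent if and only if $M_\theta$ is hyper-recurrent. Moreover, in this case $G(X)\subset\mathrm{Hr}(M_\theta)$, where $G(X)$ is the group of invertible elements of $X$.
   Context: For a bounded operator $T$ on a Banach space $X$: $x$ is recurrent if $T^{\omega_n}x\to x$ for some strictly increasing sequence $(\omega_n)$ of positive integers; $\mathrm{Rec}(T)$ is the set of recurrent vectors and $T$ is recurrent if $\mathrm{Rec}(T)$ is dense. $\mathfrak{C}$ is the set of strictly increasing sequences $\omega$ with $T^{\omega_n}x\to x$ for some $x\ne0$; $\mathfrak{L}(\omega)=\{x:T^{\omega_n}x\to x\}$. $\mathrm{Hr}(T)$ is the set of $x\in\mathrm{Rec}(T)$ such that $\mathfrak{L}(\omega)$ is dense for every $\omega\in\mathfrak{C}$ with $x\in\mathfrak{L}(\omega)$; a recurrent $T$ is hyper-recurrent if $\mathrm{Hr}(T)\ne\emptyset$. *)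

theory Defs
  imports "HOL-Analysis.Analysis"
begin

definition pos_incseq :: "(nat \<Rightarrow> nat) \<Rightarrow> bool" where
  "pos_incseq \<omega> \<longleftrightarrow> strict_mono \<omega> \<and> (\<forall>n. 0 < \<omega> n)"

definition Rec :: "('a::real_normed_vector \<Rightarrow> 'a) \<Rightarrow> 'a set" where
  "Rec T = {x. \<exists>\<omega>. pos_incseq \<omega> \<and> (\<lambda>n. (T ^^ \<omega> n) x) \<longlonglongrightarrow> x}"

definition recurrent_op :: "('a::real_normed_vector \<Rightarrow> 'a) \<Rightarrow> bool" where
  "recurrent_op T \<longleftrightarrow> closure (Rec T) = UNIV"

definition frakL :: "('a::real_normed_vector \<Rightarrow> 'a) \<Rightarrow> (nat \<Rightarrow> nat) \<Rightarrow> 'a set" where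
  "frakL T \<omega> = {x. (\<lambda>n. (T ^^ \<omega> n) x) \<longlonglongrightarrow> x}"

definition frakC :: "('a::real_normed_vector \<Rightarrow> 'a) \<Rightarrow> (nat \<Rightarrow> nat) set" where
  "frakC T = {\<omega>. pos_incseq \<omega> \<and> (\<exists>x. x \<noteq> 0 \<and> (\<lambda>n. (T ^^ \<omega> n) x) \<longlonglongrightarrow> x)}"

definition Hr :: "('a::real_normed_vector \<Rightarrow> 'a) \<Rightarrow> 'a set" where
  "Hr T = {x \<in> Rec T. \<forall>\<omega>\<in>frakC T. x \<in> frakL T \<omega> \<longrightarrow> closure (frakL T \<omega>) = UNIV}"

definition hyper_recurrent :: "('a::real_normed_vector \<Rightarrow> 'a) \<Rightarrow> bool" where
  "hyper_recurrent T \<longleftrightarrow> recurrent_op T \<and> Hr T \<noteq> {}"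

definition invertibles :: "'a::ring_1 set" where
  "invertibles = {x. \<exists>y. x * y = 1 \<and> y * x = 1}"

end

theory Submission
  imports Defs
begin

text \<open>If an invertible \<open>g\<close> satisfies \<open>\<theta>^(\<omega> n) g \<rightarrow> g\<close> (or \<open>g \<theta>^(\<omega> n) \<rightarrow> g\<close>), multiplying by \<open>g\<^sup>-\<^sup>1\<close> gives
  \<open>\<theta>^(\<omega> n) \<rightarrow> 1\<close>, hence \<open>\<theta>^(\<omega> n) y \<rightarrow> y\<close> for every \<open>y\<close>: an invertible vector lies
  in \<open>frakL M \<omega>\<close> only if that set is the whole algebra. By the Neumann series the
  invertibles contain a ball around \<open>1\<close>, so a dense set of recurrent vectors contains
  an invertible one; its sequence \<open>\<omega>\<close> makes every vector recurrent, and by the first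
  remark every invertible vector is then in \<open>Hr M\<close>.\<close>

lemma one_minus_invertible:
  fixes z :: "'a::{real_normed_algebra_1, banach}"
  assumes "norm z < 1"
  shows "1 - z \<in> invertibles"
proof -
  define s where "s = (\<Sum>k. z ^ k)"
  have summable: "summable (\<lambda>k. z ^ k)"
    using assms by (rule complete_algebra_summable_geometric)
  have "s = 1 + (\<Sum>k. z ^ Suc k)"
    using suminf_split_head[OF summable] by (simp add: s_def)
  moreover have "(\<Sum>k. z ^ Suc k) = z * s"
    using suminf_mult[OF summable, of z] by (simp add: s_def)
  moreover have "(\<Sum>k. z ^ Suc k) = s * z"
    using suminf_mult2[OF summable, of z] by (simp add: s_def power_commutes)
  ultimately have "(1 - z) * s = 1" and "s * (1 - z) = 1"
    by (simp_all add: algebra_simps)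
  then show ?thesis
    unfolding invertibles_def by blast
qed

lemma dense_set_meets_invertibles:
  fixes S :: "'a::{real_normed_algebra_1, banach} set"
  assumes "closure S = UNIV"
  obtains x where "x \<in> S" "x \<in> invertibles"
proof -
  obtain y where y: "y \<in> S" "dist y 1 < 1"
    using closure_approachable[of 1 S] assms by (metis UNIV_I zero_less_one)
  have "norm (1 - y) < 1"
    using y(2) by (simp add: dist_norm norm_minus_commute)
  then have "1 - (1 - y) \<in> invertibles"
    by (rule one_minus_invertible)
  with y(1) show ?thesis
    using that by simp
qed

lemma funpow_left_mult: "((\<lambda>y. \<theta> * y) ^^ n) y = (\<theta>::'a::monoid_mult) ^ n * y"
  by (induction n) (simp_all add: mult.assoc)

lemma funpow_right_mult: "((\<lambda>y. y * \<theta>) ^^ n) y = y * (\<theta>::'a::monoid_mult) ^ n"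
  by (induction n) (simp_all add: mult.assoc power_commutes)

lemma tendsto_one_if_mult_right_tendsto:
  fixes a :: "nat \<Rightarrow> 'a::real_normed_algebra_1"
  assumes "(\<lambda>n. a n * g) \<longlonglongrightarrow> g" and "g * h = 1"
  shows "a \<longlonglongrightarrow> 1"
proof -
  have "(\<lambda>n. a n * g * h) \<longlonglongrightarrow> g * h"
    using assms(1) by (intro tendsto_intros)
  then show ?thesis
    using assms(2) by (simp add: mult.assoc)
qed

lemma tendsto_one_if_mult_left_tendsto:
  fixes a :: "nat \<Rightarrow> 'a::real_normed_algebra_1"
  assumes "(\<lambda>n. g * a n) \<longlonglongrightarrow> g" and "h * g = 1"
  shows "a \<longlonglongrightarrow> 1"
proof -
  have "(\<lambda>n. h * (g * a n)) \<longlonglongrightarrow> h * g"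
    using assms(1) by (intro tendsto_intros)
  then show ?thesis
    using assms(2) by (simp add: mult.assoc[symmetric])
qed

lemma frakL_mult_eq_UNIV_if_powers_tendsto_one:
  fixes \<theta> :: "'a::real_normed_algebra_1"
  assumes "M = (\<lambda>y. \<theta> * y) \<or> M = (\<lambda>y. y * \<theta>)"
    and powers: "(\<lambda>n. \<theta> ^ \<omega> n) \<longlonglongrightarrow> 1"
  shows "frakL M \<omega> = UNIV"
proof -
  have "(\<lambda>n. \<theta> ^ \<omega> n * y) \<longlonglongrightarrow> y" and "(\<lambda>n. y * \<theta> ^ \<omega> n) \<longlonglongrightarrow> y" for y
    using tendsto_mult[OF powers tendsto_const] tendsto_mult[OF tendsto_const powers] by simp_all
  with assms(1) show ?thesis
    unfolding frakL_def by (auto simp: funpow_left_mult funpow_right_mult)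
qed

lemma frakL_mult_eq_UNIV_if_invertible_mem:
  fixes \<theta> :: "'a::real_normed_algebra_1"
  assumes M: "M = (\<lambda>y. \<theta> * y) \<or> M = (\<lambda>y. y * \<theta>)"
    and "g \<in> invertibles" and "g \<in> frakL M \<omega>"
  shows "frakL M \<omega> = UNIV"
proof -
  obtain h where h: "g * h = 1" "h * g = 1"
    using assms(2) unfolding invertibles_def by blast
  from M have "(\<lambda>n. \<theta> ^ \<omega> n) \<longlonglongrightarrow> 1"
  proof
    assume "M = (\<lambda>y. \<theta> * y)"
    then have "(\<lambda>n. \<theta> ^ \<omega> n * g) \<longlonglongrightarrow> g"
      using assms(3) unfolding frakL_def by (simp add: funpow_left_mult)
    then show ?thesis
      using h(1) by (rule tendsto_one_if_mult_right_tendsto)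
  next
    assume "M = (\<lambda>y. y * \<theta>)"
    then have "(\<lambda>n. g * \<theta> ^ \<omega> n) \<longlonglongrightarrow> g"
      using assms(3) unfolding frakL_def by (simp add: funpow_right_mult)
    then show ?thesis
      using h(2) by (rule tendsto_one_if_mult_left_tendsto)
  qed
  with M show ?thesis
    by (rule frakL_mult_eq_UNIV_if_powers_tendsto_one)
qed

lemma invertibles_subset_Hr_mult:
  fixes \<theta> :: "'a::{real_normed_algebra_1, banach}"
  assumes M: "M = (\<lambda>y. \<theta> * y) \<or> M = (\<lambda>y. y * \<theta>)"
    and "recurrent_op M"
  shows "invertibles \<subseteq> Hr M"
proof
  fix g :: 'a
  assume g: "g \<in> invertibles"
  obtain x where "x \<in> Rec M" and x: "x \<in> invertibles"
    using assms(2) dense_set_meets_invertibles unfolding recurrent_op_def by blast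
  then obtain \<omega> where \<omega>: "pos_incseq \<omega>" "x \<in> frakL M \<omega>"
    unfolding Rec_def frakL_def by blast
  have "frakL M \<omega> = UNIV"
    using frakL_mult_eq_UNIV_if_invertible_mem[OF M x \<omega>(2)] .
  then have "g \<in> Rec M"
    using \<omega>(1) unfolding Rec_def frakL_def by blast
  moreover have "closure (frakL M \<omega>') = UNIV" if "g \<in> frakL M \<omega>'" for \<omega>'
    using frakL_mult_eq_UNIV_if_invertible_mem[OF M g that] by simp
  ultimately show "g \<in> Hr M"
    unfolding Hr_def by blast
qed

theorem theorem5p5:
  fixes \<theta> :: "'a::{real_normed_algebra_1, banach}"
    and M :: "'a \<Rightarrow> 'a"
  assumes "M = (\<lambda>y. \<theta> * y) \<or> M = (\<lambda>y. y * \<theta>)"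
  shows "(recurrent_op M \<longleftrightarrow> hyper_recurrent M)
         \<and> (recurrent_op M \<longrightarrow> invertibles \<subseteq> Hr M)"
proof -
  have "(1::'a) \<in> invertibles"
    unfolding invertibles_def by auto
  with invertibles_subset_Hr_mult[OF assms] show ?thesis
    unfolding hyper_recurrent_def by blast
qed

end
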